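(* Let $\rho\in\mathcal{X}_2$, i.e. $\rho$ is an $\mathrm{SL}(2,\mathbb{C})$ character of the one-holed torus with $\mathrm{tr}\,\rho(XYX^{-1}Y^{-1})=2$. Then either $\mathcal{E}(\rho)=\{X_0\}$ for a single element $X_0\in\mathscr{PL}$, or $\mathcal{E}(\rho)=\mathscr{PL}$. Furthermore, in the first case, if $X_0\in\mathscr{C}$ then $\mathrm{tr}\,\rho(X_0)\in[-2,2]$ and $\mathrm{tr}\,\rho(X)\notin[-2,2]$ for all $X\in\mathscr{C}\setminus\{X_0\}$, while if $X_0\notin\mathscr{C}$ then $\mathrm{tr}\,\rho(X)\notin[-2,2]$ for all $X\in\mathscr{C}$; and in the second case $\mathrm{tr}\,\rho(X)\in[-2,2]$ for all $X\in\mathscr{C}$.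
   Context: $T$ is the one-holed torus; $\pi=\pi_1(T)$ is free on generators $X,Y$. The character variety is $\mathcal{X}=\mathrm{Hom}(\pi,\mathrm{SL}(2,\mathbb{C}))/\!/\mathrm{SL}(2,\mathbb{C})$, identified with $\mathbb{C}^3$ via $\rho\mapsto(\mathrm{tr}\,\rho(X),\mathrm{tr}\,\rho(Y),\mathrm{tr}\,\rho(XY))$. For $\kappa\in\mathbb{C}$, $\mathcal{X}_\kappa=\{\rho:\mathrm{tr}\,\rho(XYX^{-1}Y^{-1})=\kappa\}$ (independent of the choice of free generators); it is the set of $(x,y,z)$ with $x^2+y^2+z^2-xyz-2=\kappa$. $\mathscr{C}$ is the set of free homotopy classes of essential (non-trivial, non-boundary-parallel) simple closed curves on $T$; $\mathrm{tr}\,\rho(W)$ is well defined for $W\in\mathscr{C}$. $\mathscr{PL}$ is the projective lamination space of $T$, identified with $\hat{\mathbb{R}}$ so that $\mathscr{C}$ corresponds to $\hat{\mathbb{Q}}$, with the topology of $\hat{\mathbb R}$. $\Lambda\in\mathscr{PL}$ is an end invariant of $\rho$ if there exist $K>0$ and distinct $X_n\in\mathscr{C}$ with $X_n\to\Lambda$ and $|\mathrm{tr}\,\rho(X_n)|<K$ for all $n$; $\mathcal{E}(\rho)$ is the set of end invariants. *)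

theory Defs
  imports "HOL-Analysis.Analysis"
begin

text \<open>SL(2,C) elements are represented as 2x2 complex matrices of determinant 1.\<close>
type_synonym cmat = "complex^2^2"

definition mpow_nat :: "cmat \<Rightarrow> nat \<Rightarrow> cmat" where
  "mpow_nat M k = ((\<lambda>N. N ** M) ^^ k) (mat 1)"

definition mpow_int :: "cmat \<Rightarrow> int \<Rightarrow> cmat" where
  "mpow_int M n = (if 0 \<le> n then mpow_nat M (nat n) else mpow_nat (matrix_inv M) (nat (- n)))"

text \<open>Image under rho = (A = rho X, B = rho Y) of the standard (Christoffel-type) primitive word
  of homology class p X + q Y, for coprime p and q > 0:
  X^(a_1) Y X^(a_2) Y ... X^(a_q) Y with a_k = floor(k p / q) - floor((k-1) p / q).\<close>
definition word_mat :: "cmat \<Rightarrow> cmat \<Rightarrow> int \<Rightarrow> nat \<Rightarrow> cmat" where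
  "word_mat A B p q =
     foldl (\<lambda>M k. M ** mpow_int A (\<lfloor>of_int (int k * p) / (of_int (int q) :: real)\<rfloor>
                                    - \<lfloor>of_int ((int k - 1) * p) / (of_int (int q) :: real)\<rfloor>) ** B)
           (mat 1) [1..<q+1]"

text \<open>Essential simple closed curves on the one-holed torus are indexed by extended rationals
  (slopes): None is the slope 1/0 (the curve X), Some (p/q) (reduced, q > 0) is the curve
  of homology class p X + q Y.\<close>
definition tr_curve :: "cmat \<Rightarrow> cmat \<Rightarrow> rat option \<Rightarrow> complex" where
  "tr_curve A B c = (case c of
      None \<Rightarrow> trace A
    | Some r \<Rightarrow> (case quotient_of r of (p, q) \<Rightarrow> trace (word_mat A B p (nat q))))"

text \<open>The projective lamination space PL is identified with the extended real line
  (None = infinity); curves correspond to the extended rationals.\<close>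
definition curve_pt :: "rat option \<Rightarrow> real option" where
  "curve_pt c = map_option real_of_rat c"

text \<open>Convergence in the topology of the extended real line (one-point compactification).\<close>
definition hat_tendsto :: "(nat \<Rightarrow> real option) \<Rightarrow> real option \<Rightarrow> bool" where
  "hat_tendsto f L = (case L of
      Some l \<Rightarrow> (\<forall>e>0. \<exists>N. \<forall>n\<ge>N. \<exists>x. f n = Some x \<and> \<bar>x - l\<bar> < e)
    | None \<Rightarrow> (\<forall>M. \<exists>N. \<forall>n\<ge>N. f n = None \<or> (\<exists>x. f n = Some x \<and> \<bar>x\<bar> > M)))"

definition end_invariants :: "cmat \<Rightarrow> cmat \<Rightarrow> real option set" where
  "end_invariants A B = {\<Lambda>. \<exists>K>0. \<exists>Xs :: nat \<Rightarrow> rat option.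
      inj Xs \<and> hat_tendsto (\<lambda>n. curve_pt (Xs n)) \<Lambda> \<and> (\<forall>n. cmod (tr_curve A B (Xs n)) < K)}"

definition in_real_interval :: "complex \<Rightarrow> bool" where
  "in_real_interval t \<longleftrightarrow> t \<in> complex_of_real ` {-2..2}"

end

theory Submission
  imports Defs
begin

text \<open>Since \<open>tr [A, B] = 2\<close>, the additive commutator \<open>AB - BA\<close> is singular. If it is nonzero,
  its kernel is a line invariant under \<open>A\<close> and \<open>B\<close>; if it is zero, \<open>A\<close> and \<open>B\<close> commute.
  Either way \<open>A\<close> and \<open>B\<close> have a common eigenvector \<open>v\<close>, say \<open>A v = a v\<close> and \<open>B v = b v\<close>.
  The curve of homology class \<open>pX + qY\<close> then acts on \<open>v\<close> by \<open>\<mu> = a\<^sup>p b\<^sup>q\<close>, so its trace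
  is \<open>\<mu> + 1/\<mu>\<close>. This trace lies in \<open>[-2, 2]\<close> iff \<open>|\<mu>| = 1\<close>, and since
  \<open>|log |\<mu>|| \<le> |\<mu> + 1/\<mu>| \<le> 2 exp |log |\<mu>||\<close>, it is bounded along a sequence of curves iff
  \<open>L(p, q) = log |\<mu>| = p log |a| + q log |b|\<close> is. If the linear functional \<open>L\<close> vanishes, every
  trace lies in \<open>[-2, 2]\<close> and every point of PL is an end invariant. Otherwise \<open>L\<close> vanishes only
  at the slope \<open>X\<^sub>0 = -log |b| / log |a|\<close> (which is \<open>1/0\<close> if \<open>log |a| = 0\<close>): Dirichlet
  approximations \<open>p/q\<close> of \<open>X\<^sub>0\<close> satisfy \<open>q |p/q - X\<^sub>0| \<le> 1\<close>, so \<open>L\<close> stays bounded along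
  them, while along distinct curves converging to any other point \<open>|L|\<close> grows linearly with
  the denominator, which must tend to infinity.\<close>


section \<open>A common eigenvector\<close>

lemmas cmat_simps = matrix_vector_mult_def matrix_matrix_mult_def sum_2 vec_eq_iff forall_2
  det_2 trace_def mat_def

lemma kernel_vectors_cross_zero:
  fixes M :: cmat
  assumes "M *v u = 0" "M *v w = 0"
  shows "(u$1 * w$2 - u$2 * w$1) * M$i$j = 0"
proof -
  have "M$i$1 * u$1 + M$i$2 * u$2 = 0" "M$i$1 * w$1 + M$i$2 * w$2 = 0"
    using assms exhaust_2[of i] by (auto simp: cmat_simps)
  moreover have "(u$1 * w$2 - u$2 * w$1) * M$i$1
      = w$2 * (M$i$1 * u$1 + M$i$2 * u$2) - u$2 * (M$i$1 * w$1 + M$i$2 * w$2)"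
    "(u$1 * w$2 - u$2 * w$1) * M$i$2
      = u$1 * (M$i$1 * w$1 + M$i$2 * w$2) - w$1 * (M$i$1 * u$1 + M$i$2 * u$2)"
    by algebra+
  ultimately show ?thesis
    using exhaust_2[of j] by auto
qed

lemma exists_kernel_vector:
  fixes M :: cmat
  assumes "det M = 0"
  obtains u where "u \<noteq> 0" "M *v u = 0"
  using assms invertible_det_nz invertible_left_inverse matrix_left_invertible_ker by metis

lemma kernel_line:
  fixes M :: cmat
  assumes "M \<noteq> 0" "M *v u = 0" "M *v w = 0" "u \<noteq> 0"
  obtains c where "w = c *s u"
proof -
  have cross: "u$1 * w$2 = u$2 * w$1"
    using kernel_vectors_cross_zero[OF assms(2,3)] assms(1) by (auto simp: vec_eq_iff)
  consider "u$1 \<noteq> 0" | "u$2 \<noteq> 0"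
    using assms(4) by (auto simp: vec_eq_iff forall_2)
  then show thesis
  proof cases
    case 1
    then have "w = (w$1 / u$1) *s u" using cross by (auto simp: vec_eq_iff forall_2 field_simps)
    then show thesis by (rule that)
  next
    case 2
    then have "w = (w$2 / u$2) *s u" using cross by (auto simp: vec_eq_iff forall_2 field_simps)
    then show thesis by (rule that)
  qed
qed

definition adjugate2 :: "cmat \<Rightarrow> cmat" where
  "adjugate2 M = vector [vector [M$2$2, - M$1$2], vector [- M$2$1, M$1$1]]"

lemma adjugate2_right_inverse: "det M = 1 \<Longrightarrow> M ** adjugate2 M = mat 1"
  by (simp add: cmat_simps adjugate2_def vector_2 algebra_simps)

lemma adjugate2_left_inverse: "det M = 1 \<Longrightarrow> adjugate2 M ** M = mat 1"
  by (simp add: cmat_simps adjugate2_def vector_2 algebra_simps)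

lemma matrix_inv_eq_adjugate2:
  assumes "det M = 1"
  shows "matrix_inv M = adjugate2 M"
proof -
  have "M ** matrix_inv M = mat 1 \<and> matrix_inv M ** M = mat 1"
    unfolding matrix_inv_def
    by (rule someI[of _ "adjugate2 M"])
      (simp add: adjugate2_right_inverse adjugate2_left_inverse assms)
  then have "matrix_inv M ** M = mat 1" by blast
  have "matrix_inv M = matrix_inv M ** (M ** adjugate2 M)"
    by (simp add: adjugate2_right_inverse assms)
  also have "\<dots> = adjugate2 M"
    by (simp add: matrix_mul_assoc \<open>matrix_inv M ** M = mat 1\<close>)
  finally show ?thesis .
qed

lemma det_adjugate2 [simp]: "det (adjugate2 M) = det M"
  by (simp add: det_2 adjugate2_def vector_2)

lemma trace_commutator_plus_det:
  "trace (A ** B ** adjugate2 A ** adjugate2 B) + det (A ** B - B ** A) = 2 * det A * det B"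
  by (simp add: cmat_simps adjugate2_def vector_2) algebra

lemma det_commutator:
  fixes A B :: cmat
  assumes "det A = 1" "det B = 1"
  shows "det (A ** B - B ** A) = 2 - trace (A ** B ** matrix_inv A ** matrix_inv B)"
  using trace_commutator_plus_det[of A B] assms
  by (simp add: matrix_inv_eq_adjugate2 eq_diff_eq add.commute)

lemma commutator_kernel_invariant:
  fixes A B :: cmat
  assumes "(A ** B - B ** A) *v u = 0"
  shows "(A ** B - B ** A) *v (A *v u) = 0" "(A ** B - B ** A) *v (B *v u) = 0"
proof -
  have "A *v ((A ** B - B ** A) *v u) + (A ** B - B ** A) *v (A *v u)
      = trace A *s ((A ** B - B ** A) *v u)"
    "B *v ((A ** B - B ** A) *v u) + (A ** B - B ** A) *v (B *v u)
      = trace B *s ((A ** B - B ** A) *v u)"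
    by (simp_all add: cmat_simps algebra_simps)
  then show "(A ** B - B ** A) *v (A *v u) = 0" "(A ** B - B ** A) *v (B *v u) = 0"
    using assms by simp_all
qed

lemma mat_diff_mult_vector: "((A::cmat) - mat l) *v w = A *v w - l *s w"
  by (simp add: cmat_simps algebra_simps)

lemma char_poly_root: "\<exists>l. det ((M::cmat) - mat l) = 0"
proof -
  define l where "l = (trace M + csqrt (trace M ^ 2 - 4 * det M)) / 2"
  have "2 * l - trace M = csqrt (trace M ^ 2 - 4 * det M)"
    unfolding l_def by (simp add: field_simps)
  then have "(2 * l - trace M) ^ 2 = trace M ^ 2 - 4 * det M"
    by simp
  moreover have "4 * det (M - mat l) = (2 * l - trace M) ^ 2 - (trace M ^ 2 - 4 * det M)"
    by (simp add: cmat_simps power2_eq_square algebra_simps)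
  ultimately show ?thesis by auto
qed

lemma exists_eigenvector:
  fixes M :: cmat
  obtains v l where "v \<noteq> 0" "M *v v = l *s v"
proof -
  obtain l where "det (M - mat l) = 0" using char_poly_root by blast
  then obtain v where "v \<noteq> 0" "(M - mat l) *v v = 0" by (rule exists_kernel_vector)
  then show thesis using that[of v l] by (simp add: mat_diff_mult_vector)
qed

lemma common_eigenvector_of_invariant_kernel:
  fixes M A B :: cmat
  assumes "M \<noteq> 0" "det M = 0"
    and "\<And>u. M *v u = 0 \<Longrightarrow> M *v (A *v u) = 0" "\<And>u. M *v u = 0 \<Longrightarrow> M *v (B *v u) = 0"
  obtains v a b where "v \<noteq> 0" "A *v v = a *s v" "B *v v = b *s v"
proof -
  obtain u where u: "u \<noteq> 0" "M *v u = 0" using assms(2) by (rule exists_kernel_vector)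
  obtain a where "A *v u = a *s u"
    using kernel_line[OF assms(1) u(2) assms(3)[OF u(2)] u(1)] .
  moreover obtain b where "B *v u = b *s u"
    using kernel_line[OF assms(1) u(2) assms(4)[OF u(2)] u(1)] .
  ultimately show thesis using that u(1) by blast
qed

lemma common_eigenvector_of_commuting:
  fixes A B :: cmat
  assumes "A ** B = B ** A"
  obtains v a b where "v \<noteq> 0" "A *v v = a *s v" "B *v v = b *s v"
proof -
  obtain u l where u: "u \<noteq> 0" "A *v u = l *s u" by (rule exists_eigenvector)
  show thesis
  proof (cases "A = mat l")
    case True
    obtain v b where "v \<noteq> 0" "B *v v = b *s v" by (rule exists_eigenvector)
    then show thesis using that[of v l b] True by (simp add: cmat_simps)
  next
    case False
    have "A *v (B *v u) = B *v (A *v u)"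
      by (simp add: matrix_vector_mul_assoc assms)
    then have "(A - mat l) *v (B *v u) = 0"
      by (simp add: mat_diff_mult_vector u(2) vector_scalar_commute)
    moreover have "(A - mat l) *v u = 0" by (simp add: mat_diff_mult_vector u(2))
    ultimately obtain b where "B *v u = b *s u"
      using kernel_line[of "A - mat l" u "B *v u"] False u(1) by auto
    then show thesis using that u by blast
  qed
qed

lemma common_eigenvector_of_trace_commutator_2:
  fixes A B :: cmat
  assumes "det A = 1" "det B = 1" "trace (A ** B ** matrix_inv A ** matrix_inv B) = 2"
  obtains v a b where "v \<noteq> 0" "A *v v = a *s v" "B *v v = b *s v"
proof (cases "A ** B = B ** A")
  case True
  then show thesis using common_eigenvector_of_commuting that by blast
next
  case False
  have "det (A ** B - B ** A) = 0" using det_commutator[OF assms(1,2)] assms(3) by simp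
  then show thesis
    using common_eigenvector_of_invariant_kernel[of "A ** B - B ** A" A B] False that
      commutator_kernel_invariant by auto
qed


section \<open>Traces of curves along a common eigenvector\<close>

lemma det1_eigenvalue:
  fixes M :: cmat
  assumes "det M = 1" "M *v v = \<mu> *s v" "v \<noteq> 0"
  shows "\<mu> \<noteq> 0" "trace M = \<mu> + 1 / \<mu>"
proof -
  have "M *v (M *v v) = trace M *s (M *v v) - det M *s v"
    by (simp add: cmat_simps algebra_simps)
  then have "(\<mu> * \<mu>) *s v = (trace M * \<mu> - 1) *s v"
    using assms(1,2) by (simp add: vector_scalar_commute vector_smult_assoc algebra_simps)
  then have char: "\<mu> * \<mu> = trace M * \<mu> - 1"
    using assms(3) by (metis vector_mul_rcancel)
  then show "\<mu> \<noteq> 0" by auto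
  with char show "trace M = \<mu> + 1 / \<mu>" by (simp add: field_simps)
qed

lemma mpow_nat_eigenvector:
  fixes M :: cmat
  assumes "M *v v = m *s v"
  shows "mpow_nat M k *v v = m ^ k *s v"
  by (induction k)
    (simp_all add: mpow_nat_def flip: matrix_vector_mul_assoc,
     simp_all add: mpow_nat_def assms vector_scalar_commute vector_smult_assoc mult.commute)

lemma det_mpow_nat: "det (mpow_nat M k) = det M ^ k"
  by (induction k) (simp_all add: mpow_nat_def det_mul)

lemma matrix_inv_eigenvector:
  fixes A :: cmat
  assumes "det A = 1" "A *v v = a *s v" "a \<noteq> 0"
  shows "matrix_inv A *v v = inverse a *s v"
proof -
  have "v = adjugate2 A *v (A *v v)"
    using adjugate2_left_inverse[OF assms(1)] by (simp add: matrix_vector_mul_assoc)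
  also have "\<dots> = a *s (adjugate2 A *v v)"
    by (simp add: assms(2) vector_scalar_commute)
  finally have "inverse a *s v = (inverse a * a) *s (adjugate2 A *v v)"
    by (metis vector_smult_assoc)
  then have "inverse a *s v = adjugate2 A *v v"
    using assms(3) by simp
  then show ?thesis using matrix_inv_eq_adjugate2[OF assms(1)] by simp
qed

lemma mpow_int_eigenvector:
  fixes A :: cmat
  assumes "det A = 1" "A *v v = a *s v" "a \<noteq> 0"
  shows "mpow_int A k *v v = a powi k *s v"
  using mpow_nat_eigenvector[OF assms(2)] mpow_nat_eigenvector[OF matrix_inv_eigenvector[OF assms]]
  by (simp add: mpow_int_def power_int_def power_inverse)

lemma det_mpow_int: "det (A::cmat) = 1 \<Longrightarrow> det (mpow_int A k) = 1"
  by (simp add: mpow_int_def det_mpow_nat matrix_inv_eq_adjugate2)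

lemma foldl_word_eigenvector:
  fixes A B :: cmat
  assumes "det A = 1" "A *v v = a *s v" "a \<noteq> 0" "B *v v = b *s v"
  shows "foldl (\<lambda>M k. M ** mpow_int A (e k) ** B) (mat 1) ks *v v
    = (a powi (\<Sum>k\<leftarrow>ks. e k) * b ^ length ks) *s v"
proof (induction ks rule: rev_induct)
  case (snoc k ks)
  then show ?case
    by (simp add: assms mpow_int_eigenvector[OF assms(1-3)] power_int_add vector_scalar_commute
        vector_smult_assoc flip: matrix_vector_mul_assoc)
qed simp

lemma det_foldl_word:
  fixes A B :: cmat
  assumes "det A = 1" "det B = 1"
  shows "det (foldl (\<lambda>M k. M ** mpow_int A (e k) ** B) (mat 1) ks) = 1"
  by (induction ks rule: rev_induct) (simp_all add: det_mul det_mpow_int assms)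

lemma sum_word_exponents:
  "(\<Sum>k\<leftarrow>[1..<n+1]. \<lfloor>of_int (int k * p) / (of_int q :: real)\<rfloor>
     - \<lfloor>of_int ((int k - 1) * p) / (of_int q :: real)\<rfloor>) = \<lfloor>of_int (int n * p) / (of_int q :: real)\<rfloor>"
  by (induction n) simp_all

lemma word_mat_eigenvector:
  assumes "det A = 1" "A *v v = a *s v" "a \<noteq> 0" "B *v v = b *s v" "q > 0"
  shows "word_mat A B p q *v v = (a powi p * b ^ q) *s v"
  unfolding word_mat_def foldl_word_eigenvector[OF assms(1-4)] sum_word_exponents
  using assms(5) by simp

lemma det_word_mat: "det A = 1 \<Longrightarrow> det B = 1 \<Longrightarrow> det (word_mat A B p q) = 1"
  unfolding word_mat_def by (rule det_foldl_word)

definition curve_class :: "rat option \<Rightarrow> int \<times> int" where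
  "curve_class c = (case c of None \<Rightarrow> (1, 0) | Some r \<Rightarrow> quotient_of r)"

definition curve_mat :: "cmat \<Rightarrow> cmat \<Rightarrow> rat option \<Rightarrow> cmat" where
  "curve_mat A B c = (case c of None \<Rightarrow> A
     | Some r \<Rightarrow> word_mat A B (fst (quotient_of r)) (nat (snd (quotient_of r))))"

definition curve_eigenvalue :: "complex \<Rightarrow> complex \<Rightarrow> rat option \<Rightarrow> complex" where
  "curve_eigenvalue a b c = a powi fst (curve_class c) * b powi snd (curve_class c)"

definition class_pairing :: "real \<Rightarrow> real \<Rightarrow> rat option \<Rightarrow> real" where
  "class_pairing \<alpha> \<beta> c = \<alpha> * of_int (fst (curve_class c)) + \<beta> * of_int (snd (curve_class c))"

lemma tr_curve_eq_trace: "tr_curve A B c = trace (curve_mat A B c)"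
  by (cases c) (auto simp: tr_curve_def curve_mat_def split: prod.split)

lemma det_curve_mat: "det A = 1 \<Longrightarrow> det B = 1 \<Longrightarrow> det (curve_mat A B c) = 1"
  by (cases c) (simp_all add: curve_mat_def det_word_mat)

lemma curve_mat_eigenvector:
  fixes A B :: cmat
  assumes "det A = 1" "A *v v = a *s v" "a \<noteq> 0" "B *v v = b *s v"
  shows "curve_mat A B c *v v = curve_eigenvalue a b c *s v"
proof (cases c)
  case (Some r)
  have "snd (quotient_of r) > 0" by (rule quotient_of_denom_pos')
  then show ?thesis
    using word_mat_eigenvector[OF assms]
    by (simp add: Some curve_mat_def curve_eigenvalue_def curve_class_def power_int_def)
qed (simp add: assms(2) curve_mat_def curve_eigenvalue_def curve_class_def)

lemma tr_curve_common_eigenvector: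
  fixes A B :: cmat
  assumes "det A = 1" "det B = 1" "v \<noteq> 0" "A *v v = a *s v" "B *v v = b *s v"
  shows "curve_eigenvalue a b c \<noteq> 0"
    and "tr_curve A B c = curve_eigenvalue a b c + 1 / curve_eigenvalue a b c"
proof -
  have "a \<noteq> 0" using det1_eigenvalue(1)[OF assms(1,4,3)] .
  then have "curve_mat A B c *v v = curve_eigenvalue a b c *s v"
    using curve_mat_eigenvector assms by blast
  then show "curve_eigenvalue a b c \<noteq> 0"
    and "tr_curve A B c = curve_eigenvalue a b c + 1 / curve_eigenvalue a b c"
    using det1_eigenvalue[OF det_curve_mat[OF assms(1,2)] _ assms(3)]
    by (simp_all add: tr_curve_eq_trace)
qed

lemma ln_power_int: "0 < x \<Longrightarrow> ln (x powi n) = of_int n * ln (x::real)"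
  by (metis less_le ln_powr powr_real_of_int')

lemma ln_norm_curve_eigenvalue:
  assumes "a \<noteq> 0" "b \<noteq> 0"
  shows "ln (cmod (curve_eigenvalue a b c)) = class_pairing (ln (cmod a)) (ln (cmod b)) c"
  using assms
  by (simp add: curve_eigenvalue_def class_pairing_def norm_mult norm_power_int ln_mult
      power_int_eq_0_iff ln_power_int)


section \<open>The size of \<open>\<mu> + 1/\<mu>\<close>\<close>

lemma in_real_interval_plus_inverse_iff:
  assumes "(m::complex) \<noteq> 0"
  shows "in_real_interval (m + 1 / m) \<longleftrightarrow> cmod m = 1"
proof
  assume "cmod m = 1"
  then have "1 / m = cnj m"
    using assms complex_norm_square[of m] by (simp add: field_simps)
  then have "m + 1 / m = complex_of_real (2 * Re m)"
    by (simp add: complex_add_cnj)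
  moreover have "\<bar>Re m\<bar> \<le> 1" using abs_Re_le_cmod[of m] \<open>cmod m = 1\<close> by simp
  ultimately show "in_real_interval (m + 1 / m)"
    unfolding in_real_interval_def by (intro rev_image_eqI[of "2 * Re m"]) auto
next
  assume "in_real_interval (m + 1 / m)"
  then obtain t where t: "-2 \<le> t" "t \<le> 2" "m + 1 / m = complex_of_real t"
    unfolding in_real_interval_def by auto
  define s where "s = sqrt (4 - t\<^sup>2)"
  have "t\<^sup>2 \<le> 4" using abs_le_square_iff[of t 2] t(1,2) by (simp add: abs_le_iff)
  then have s2: "s\<^sup>2 = 4 - t\<^sup>2" by (simp add: s_def)
  have "(2 * m - t)\<^sup>2 = (\<i> * s)\<^sup>2"
  proof -
    have "(2 * m - t)\<^sup>2 = 4 * (m * (m + 1 / m) - 1) - 4 * m * t + t\<^sup>2"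
      using assms by (simp add: field_simps power2_eq_square)
    also have "\<dots> = complex_of_real (t\<^sup>2 - 4)" using t(3) by (simp add: field_simps)
    also have "\<dots> = - complex_of_real (s\<^sup>2)" using s2 by simp
    finally show ?thesis by (simp add: power_mult_distrib)
  qed
  then have "2 * m - t = \<i> * s \<or> 2 * m - t = - (\<i> * s)"
    by (simp add: power2_eq_iff)
  then have "Re m = t / 2" "Im m = s / 2 \<or> Im m = - s / 2"
    by (auto simp: complex_eq_iff)
  then have "(cmod m)\<^sup>2 = (t / 2)\<^sup>2 + (s / 2)\<^sup>2"
    by (auto simp: cmod_power2)
  also have "\<dots> = 1"
    using s2 by (simp add: power_divide add_divide_distrib[symmetric])
  finally have "(cmod m)\<^sup>2 = 1" .
  then show "cmod m = 1" using norm_ge_zero[of m] by (auto simp: power2_eq_1_iff)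
qed

lemma abs_le_abs_exp_diff: "\<bar>u::real\<bar> \<le> \<bar>exp u - exp (- u)\<bar>"
proof (cases "u \<ge> 0")
  case True
  then have "exp (- u) \<le> 1" by simp
  then show ?thesis using True exp_ge_add_one_self[of u] by linarith
next
  case False
  then have "exp u \<le> 1" by simp
  then show ?thesis using False exp_ge_add_one_self[of "- u"] by linarith
qed

lemma norm_plus_inverse_bounds:
  assumes "(m::complex) \<noteq> 0"
  shows "\<bar>ln (cmod m)\<bar> \<le> cmod (m + 1 / m)" "cmod (m + 1 / m) \<le> 2 * exp \<bar>ln (cmod m)\<bar>"
proof -
  define u where "u = ln (cmod m)"
  have norms: "cmod m = exp u" "cmod (1 / m) = exp (- u)"
    using assms by (simp_all add: u_def norm_divide exp_minus divide_inverse norm_inverse)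
  have "\<bar>cmod m - cmod (1 / m)\<bar> \<le> cmod (m + 1 / m)"
    using norm_diff_ineq[of m "1 / m"] norm_diff_ineq[of "1 / m" m] by (simp add: add.commute)
  then have "\<bar>u\<bar> \<le> cmod (m + 1 / m)"
    using abs_le_abs_exp_diff[of u] unfolding norms by linarith
  then show "\<bar>ln (cmod m)\<bar> \<le> cmod (m + 1 / m)" by (simp add: u_def)
  have "cmod (m + 1 / m) \<le> exp u + exp (- u)"
    using norm_triangle_ineq[of m "1 / m"] unfolding norms .
  also have "\<dots> \<le> 2 * exp \<bar>u\<bar>"
    by (cases "u \<ge> 0") simp_all
  finally show "cmod (m + 1 / m) \<le> 2 * exp \<bar>ln (cmod m)\<bar>" unfolding u_def .
qed


section \<open>Rational approximation\<close>

abbreviation denom :: "rat \<Rightarrow> int" where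
  "denom r \<equiv> snd (quotient_of r)"

lemma denom_ge_1: "1 \<le> real_of_int (denom r)"
  using quotient_of_denom_pos'[of r] by linarith

lemma of_rat_eq_quotient: "real_of_rat r = of_int (fst (quotient_of r)) / of_int (denom r)"
proof -
  have "r = of_int (fst (quotient_of r)) / of_int (denom r)"
    by (rule quotient_of_div) simp
  then show ?thesis by (metis of_rat_divide of_rat_of_int_eq)
qed

lemma denom_le:
  assumes "k > 0" "r = of_int h / of_int k"
  shows "denom r \<le> k"
proof -
  obtain p q where pq: "quotient_of r = (p, q)" by (cases "quotient_of r")
  have "q > 0" "coprime p q" using quotient_of_denom_pos[OF pq] quotient_of_coprime[OF pq] .
  have "(of_int p / of_int q :: rat) = of_int h / of_int k"
    using quotient_of_div[OF pq] assms(2) by simp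
  then have "p * k = h * q"
    using \<open>q > 0\<close> assms(1) by (simp add: frac_eq_eq flip: of_int_mult of_int_eq_iff)
  then have "q dvd k"
    using \<open>coprime p q\<close> by (metis coprime_commute coprime_dvd_mult_right_iff dvd_triv_right)
  then show ?thesis using pq assms(1) by (simp add: zdvd_imp_le)
qed

lemma finite_bounded_height_rats:
  fixes M Q :: real
  shows "finite {r :: rat. \<bar>of_rat r\<bar> \<le> M \<and> of_int (denom r) \<le> Q}"
proof -
  define H where "H = \<lceil>\<bar>M\<bar> * Q\<rceil>"
  have "{r :: rat. \<bar>of_rat r\<bar> \<le> M \<and> of_int (denom r) \<le> Q}
      \<subseteq> (\<lambda>(p, q). of_int p / of_int q) ` ({-H..H} \<times> {1..\<lceil>Q\<rceil>})"
  proof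
    fix r :: rat assume "r \<in> {r. \<bar>of_rat r\<bar> \<le> M \<and> of_int (denom r) \<le> Q}"
    then have r: "\<bar>of_rat r\<bar> \<le> M" "of_int (denom r) \<le> Q" by auto
    obtain p q where pq: "quotient_of r = (p, q)" by (cases "quotient_of r")
    have "q > 0" using quotient_of_denom_pos[OF pq] .
    have "real_of_int p = of_rat r * of_int q"
      using of_rat_eq_quotient[of r] \<open>q > 0\<close> by (simp add: pq field_simps)
    then have "\<bar>real_of_int p\<bar> = \<bar>of_rat r\<bar> * of_int q"
      using \<open>q > 0\<close> by (simp add: abs_mult)
    also have "\<dots> \<le> \<bar>M\<bar> * Q"
      using r pq \<open>q > 0\<close> by (intro mult_mono) auto
    finally have "\<bar>p\<bar> \<le> H" unfolding H_def by linarith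
    moreover have "q \<le> \<lceil>Q\<rceil>" using r(2) pq by simp linarith
    ultimately show "r \<in> (\<lambda>(p, q). of_int p / of_int q) ` ({-H..H} \<times> {1..\<lceil>Q\<rceil>})"
      using quotient_of_div[OF pq] \<open>q > 0\<close> by (intro rev_image_eqI[of "(p, q)"]) auto
  qed
  then show ?thesis by (rule finite_subset) simp
qed

lemma inj_eventually_notin_finite:
  fixes X :: "nat \<Rightarrow> 'a"
  assumes "inj X" "finite F"
  obtains N where "\<And>n. n \<ge> N \<Longrightarrow> X n \<notin> F"
proof -
  obtain N where "X -` F \<subseteq> {..<N}"
    using finite_nat_bounded[OF finite_vimageI[OF assms(2,1)]] by blast
  then show thesis by (intro that[of N]) auto
qed

definition good_approximations :: "real \<Rightarrow> rat set" where
  "good_approximations x = {r. of_int (denom r) * \<bar>of_rat r - x\<bar> \<le> 1}"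

text \<open>Dirichlet's approximations of a rational \<open>x\<close> may coincide with \<open>x\<close>, so instead
  \<open>x = p/d\<close> is shifted by \<open>1/(d N)\<close>.\<close>
lemma good_approximation_of_rational:
  assumes "x \<in> \<rat>" "N > 0"
  obtains r where "r \<in> good_approximations x" "of_rat r \<noteq> x" "\<bar>of_rat r - x\<bar> \<le> 1 / real N"
proof -
  obtain p d where x: "x = of_int p / of_int d" and "d > 0"
    using assms(1) by (cases rule: Rats_cases') auto
  define k where "k = d * int N"
  have "k > 0" using assms(2) \<open>d > 0\<close> by (simp add: k_def)
  define r where "r = (of_int (p * int N + 1) / of_int k :: rat)"
  have dist: "of_rat r - x = 1 / of_int k"
    using \<open>d > 0\<close> assms(2)
    by (simp add: r_def x k_def of_rat_divide of_rat_mult of_rat_add field_simps)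
  have "denom r \<le> k" using denom_le[OF \<open>k > 0\<close> r_def] .
  then have "r \<in> good_approximations x"
    using \<open>k > 0\<close> by (simp add: good_approximations_def dist divide_le_eq_1)
  moreover have "real N \<le> of_int k"
    using \<open>d > 0\<close> mult_right_mono[of 1 "of_int d" "real N"] by (simp add: k_def)
  then have "\<bar>of_rat r - x\<bar> \<le> 1 / real N"
    using assms(2) dist \<open>k > 0\<close> by (simp add: frac_le)
  moreover have "of_rat r \<noteq> x" using dist \<open>k > 0\<close> by auto
  ultimately show thesis using that by blast
qed

lemma good_approximation_of_irrational:
  assumes "x \<notin> \<rat>" "N > 0"
  obtains r where "r \<in> good_approximations x" "of_rat r \<noteq> x" "\<bar>of_rat r - x\<bar> \<le> 1 / real N"
proof -
  obtain h k where hk: "0 < k" "k \<le> int N" "\<bar>of_int k * x - of_int h\<bar> < 1 / N"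
    using Dirichlet_approx[OF assms(2)] by blast
  define r where "r = (of_int h / of_int k :: rat)"
  have "denom r \<le> k" using denom_le[OF hk(1) r_def] .
  have "of_int (denom r) * \<bar>of_rat r - x\<bar> \<le> of_int k * \<bar>of_rat r - x\<bar>"
    using \<open>denom r \<le> k\<close> by (intro mult_right_mono) auto
  also have "\<dots> = \<bar>of_int k * x - of_int h\<bar>"
    using hk(1) by (simp add: r_def of_rat_divide abs_mult[symmetric] field_simps abs_minus_commute)
  finally have close: "of_int (denom r) * \<bar>of_rat r - x\<bar> < 1 / N"
    using hk(3) by linarith
  moreover have "1 / real N \<le> 1" using assms(2) by simp
  ultimately have "r \<in> good_approximations x"
    by (simp add: good_approximations_def)
  moreover have "\<bar>of_rat r - x\<bar> \<le> 1 / real N"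
    using mult_right_mono[OF denom_ge_1[of r] abs_ge_zero[of "of_rat r - x"]] close by simp
  moreover have "of_rat r \<noteq> x" using assms(1) by auto
  ultimately show thesis using that by blast
qed

lemma infinite_good_approximations: "infinite (good_approximations x)"
proof
  assume "finite (good_approximations x)"
  then have "\<not> x islimpt (of_rat ` good_approximations x)" by (simp add: islimpt_finite)
  moreover have "x islimpt (of_rat ` good_approximations x)"
    unfolding islimpt_approachable dist_real_def
  proof (intro allI impI)
    fix e :: real assume "e > 0"
    then obtain N :: nat where N: "N > 0" "1 / real N < e"
      using ex_inverse_of_nat_less by (auto simp: inverse_eq_divide)
    obtain r where "r \<in> good_approximations x" "of_rat r \<noteq> x" "\<bar>of_rat r - x\<bar> \<le> 1 / real N"
      using good_approximation_of_rational good_approximation_of_irrational N(1) by metis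
    then show "\<exists>y\<in>of_rat ` good_approximations x. y \<noteq> x \<and> \<bar>y - x\<bar> < e"
      using N(2) by force
  qed
  ultimately show False by blast
qed

text \<open>Only finitely many rationals of bounded size have bounded denominator, so an injective
  sequence of good approximations has denominators tending to infinity.\<close>
lemma good_approximations_tendsto:
  fixes X :: "nat \<Rightarrow> rat"
  assumes "inj X" "range X \<subseteq> good_approximations x"
  shows "hat_tendsto (\<lambda>n. curve_pt (Some (X n))) (Some x)"
proof -
  have "\<exists>N. \<forall>n\<ge>N. \<bar>of_rat (X n) - x\<bar> < e" if "e > 0" for e
  proof -
    obtain N where
      N: "\<And>n. n \<ge> N \<Longrightarrow> X n \<notin> {r. \<bar>of_rat r\<bar> \<le> \<bar>x\<bar> + 1 \<and> of_int (denom r) \<le> 1 / e}"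
      using inj_eventually_notin_finite[OF assms(1) finite_bounded_height_rats] by blast
    have "\<bar>of_rat (X n) - x\<bar> < e" if "n \<ge> N" for n
    proof -
      have "of_int (denom (X n)) * \<bar>of_rat (X n) - x\<bar> \<le> 1"
        using assms(2) by (auto simp: good_approximations_def)
      then have dist: "\<bar>of_rat (X n) - x\<bar> \<le> 1 / of_int (denom (X n))"
        using denom_ge_1[of "X n"] by (simp add: field_simps)
      moreover have "1 / real_of_int (denom (X n)) \<le> 1"
        using denom_ge_1[of "X n"] by simp
      ultimately have "\<bar>of_rat (X n)\<bar> \<le> \<bar>x\<bar> + 1" by linarith
      then have "1 / e < of_int (denom (X n))" using N[OF that] by (auto simp: not_le)
      then have "1 / of_int (denom (X n)) < e"
        using \<open>e > 0\<close> denom_ge_1[of "X n"] by (simp add: field_simps)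
      then show ?thesis using dist by linarith
    qed
    then show ?thesis by blast
  qed
  then show ?thesis by (simp add: hat_tendsto_def curve_pt_def)
qed

lemma hat_tendsto_of_nat: "hat_tendsto (\<lambda>n. curve_pt (Some (of_nat n))) None"
proof -
  have "\<exists>N. \<forall>n\<ge>N. M < real n" for M :: real
  proof -
    obtain N :: nat where "M < real N" using reals_Archimedean2 by blast
    then have "\<forall>n\<ge>N. M < real n" by (meson less_le_trans of_nat_le_iff)
    then show ?thesis by blast
  qed
  then show ?thesis by (simp add: hat_tendsto_def curve_pt_def)
qed


section \<open>Ends of a linear functional on homology\<close>

definition bounded_ends :: "(rat option \<Rightarrow> real) \<Rightarrow> real option set" where
  "bounded_ends f = {\<Lambda>. \<exists>K>0. \<exists>Xs :: nat \<Rightarrow> rat option.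
      inj Xs \<and> hat_tendsto (\<lambda>n. curve_pt (Xs n)) \<Lambda> \<and> (\<forall>n. f (Xs n) < K)}"

lemma end_invariants_eq_bounded_ends:
  "end_invariants A B = bounded_ends (\<lambda>c. cmod (tr_curve A B c))"
  by (simp add: end_invariants_def bounded_ends_def)

lemma bounded_endsI:
  assumes "inj Xs" "hat_tendsto (\<lambda>n. curve_pt (Xs n)) \<Lambda>" "\<And>n. f (Xs n) \<le> K"
  shows "\<Lambda> \<in> bounded_ends f"
proof -
  have "f (Xs n) < \<bar>K\<bar> + 1" for n using assms(3)[of n] by simp
  then show ?thesis
    unfolding bounded_ends_def using assms(1,2) by (auto intro!: exI[of _ "\<bar>K\<bar> + 1"])
qed

lemma bounded_endsE:
  assumes "\<Lambda> \<in> bounded_ends f"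
  obtains Xs K where "inj Xs" "hat_tendsto (\<lambda>n. curve_pt (Xs n)) \<Lambda>" "\<And>n. f (Xs n) < K"
  using assms unfolding bounded_ends_def by blast

lemma bounded_ends_mono:
  assumes "\<And>c. f c \<le> \<phi> (g c)" "mono \<phi>"
  shows "bounded_ends g \<subseteq> bounded_ends f"
proof
  fix \<Lambda> assume "\<Lambda> \<in> bounded_ends g"
  then obtain Xs K where Xs: "inj Xs" "hat_tendsto (\<lambda>n. curve_pt (Xs n)) \<Lambda>" "\<And>n. g (Xs n) < K"
    by (erule bounded_endsE)
  have "f (Xs n) \<le> \<phi> K" for n
    using assms(1)[of "Xs n"] monoD[OF assms(2), of "g (Xs n)" K] Xs(3)[of n] by simp
  with Xs(1,2) show "\<Lambda> \<in> bounded_ends f" by (rule bounded_endsI)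
qed

lemma class_pairing_None [simp]: "class_pairing \<alpha> \<beta> None = \<alpha>"
  by (simp add: class_pairing_def curve_class_def)

lemma class_pairing_Some: "class_pairing \<alpha> \<beta> (Some r) = of_int (denom r) * (\<alpha> * of_rat r + \<beta>)"
  using of_rat_eq_quotient[of r] denom_ge_1[of r]
  by (simp add: class_pairing_def curve_class_def field_simps)

definition kernel_slope :: "real \<Rightarrow> real \<Rightarrow> real option" where
  "kernel_slope \<alpha> \<beta> = (if \<alpha> = 0 then None else Some (- \<beta> / \<alpha>))"

lemma inj_curve_pt: "inj curve_pt"
  unfolding curve_pt_def by (intro option.inj_map) (simp add: inj_def)

lemma class_pairing_eq_0_iff:
  assumes "\<alpha> \<noteq> 0 \<or> \<beta> \<noteq> 0"
  shows "class_pairing \<alpha> \<beta> c = 0 \<longleftrightarrow> curve_pt c = kernel_slope \<alpha> \<beta>"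
proof (cases c)
  case None
  then show ?thesis using assms by (simp add: kernel_slope_def curve_pt_def)
next
  case (Some r)
  have "class_pairing \<alpha> \<beta> c = 0 \<longleftrightarrow> \<alpha> * of_rat r + \<beta> = 0"
    using denom_ge_1[of r] by (simp add: Some class_pairing_Some)
  also have "\<dots> \<longleftrightarrow> curve_pt c = kernel_slope \<alpha> \<beta>"
    using assms by (auto simp: Some kernel_slope_def curve_pt_def field_simps)
  finally show ?thesis .
qed

lemma denom_of_nat [simp]: "denom (of_nat n) = 1"
  using quotient_of_int[of "int n"] by simp

lemma kernel_slope_mem_bounded_ends:
  "kernel_slope \<alpha> \<beta> \<in> bounded_ends (\<lambda>c. \<bar>class_pairing \<alpha> \<beta> c\<bar>)"
proof (cases "\<alpha> = 0")
  case True
  have "inj (\<lambda>n. Some (of_nat n :: rat))" by (simp add: inj_def)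
  moreover note hat_tendsto_of_nat
  moreover have "\<bar>class_pairing \<alpha> \<beta> (Some (of_nat n))\<bar> \<le> \<bar>\<beta>\<bar>" for n
    using True by (simp add: class_pairing_Some)
  ultimately have "None \<in> bounded_ends (\<lambda>c. \<bar>class_pairing \<alpha> \<beta> c\<bar>)"
    by (rule bounded_endsI[where f = "\<lambda>c. \<bar>class_pairing \<alpha> \<beta> c\<bar>"])
  then show ?thesis using True by (simp add: kernel_slope_def)
next
  case False
  define x where "x = - \<beta> / \<alpha>"
  obtain X :: "nat \<Rightarrow> rat" where X: "inj X" "range X \<subseteq> good_approximations x"
    using infinite_countable_subset[OF infinite_good_approximations] by blast
  have "inj (\<lambda>n. Some (X n))" using X(1) by (simp add: inj_def)
  moreover have "hat_tendsto (\<lambda>n. curve_pt (Some (X n))) (Some x)"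
    using X by (rule good_approximations_tendsto)
  moreover have "\<bar>class_pairing \<alpha> \<beta> (Some (X n))\<bar> \<le> \<bar>\<alpha>\<bar>" for n
  proof -
    have "\<alpha> * of_rat (X n) + \<beta> = \<alpha> * (of_rat (X n) - x)"
      using False by (simp add: x_def field_simps)
    then have "\<bar>class_pairing \<alpha> \<beta> (Some (X n))\<bar>
        = \<bar>\<alpha>\<bar> * (of_int (denom (X n)) * \<bar>of_rat (X n) - x\<bar>)"
      using denom_ge_1[of "X n"] by (simp add: class_pairing_Some abs_mult)
    also have "\<dots> \<le> \<bar>\<alpha>\<bar>"
      using X(2) by (intro mult_left_le) (auto simp: good_approximations_def)
    finally show ?thesis .
  qed
  ultimately have "Some x \<in> bounded_ends (\<lambda>c. \<bar>class_pairing \<alpha> \<beta> c\<bar>)"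
    by (rule bounded_endsI[where f = "\<lambda>c. \<bar>class_pairing \<alpha> \<beta> c\<bar>"])
  then show ?thesis using False by (simp add: kernel_slope_def x_def)
qed

lemma affine_bounded_away_near:
  fixes \<alpha> \<beta> l x :: real
  assumes "(\<bar>\<alpha>\<bar> + 1) * \<bar>x - l\<bar> \<le> \<bar>\<alpha> * l + \<beta>\<bar> / 2"
  shows "\<bar>\<alpha> * l + \<beta>\<bar> / 2 \<le> \<bar>\<alpha> * x + \<beta>\<bar>"
proof -
  have "\<bar>\<alpha> * (x - l)\<bar> \<le> (\<bar>\<alpha>\<bar> + 1) * \<bar>x - l\<bar>"
    by (simp add: abs_mult mult_right_mono)
  moreover have "\<bar>\<alpha> * l + \<beta>\<bar> \<le> \<bar>\<alpha> * x + \<beta>\<bar> + \<bar>\<alpha> * (x - l)\<bar>"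
    using abs_triangle_ineq4[of "\<alpha> * x + \<beta>" "\<alpha> * (x - l)"] by (simp add: algebra_simps)
  ultimately show ?thesis using assms by argo
qed

lemma Some_notin_bounded_ends:
  assumes "\<alpha> * l + \<beta> \<noteq> 0"
  shows "Some l \<notin> bounded_ends (\<lambda>c. \<bar>class_pairing \<alpha> \<beta> c\<bar>)"
proof
  assume "Some l \<in> bounded_ends (\<lambda>c. \<bar>class_pairing \<alpha> \<beta> c\<bar>)"
  then obtain Xs K where Xs: "inj Xs" "hat_tendsto (\<lambda>n. curve_pt (Xs n)) (Some l)"
    "\<And>n. \<bar>class_pairing \<alpha> \<beta> (Xs n)\<bar> < K"
    by (erule bounded_endsE)
  define \<delta> where "\<delta> = \<bar>\<alpha> * l + \<beta>\<bar> / 2"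
  have "\<delta> > 0" using assms by (simp add: \<delta>_def)
  define \<epsilon> where "\<epsilon> = min 1 (\<delta> / (\<bar>\<alpha>\<bar> + 1))"
  have "\<epsilon> > 0" using \<open>\<delta> > 0\<close> by (simp add: \<epsilon>_def)
  have "\<forall>e>0. \<exists>N. \<forall>n\<ge>N. \<exists>x. curve_pt (Xs n) = Some x \<and> \<bar>x - l\<bar> < e"
    using Xs(2) by (simp add: hat_tendsto_def)
  then obtain N where N: "\<And>n. n \<ge> N \<Longrightarrow> \<exists>x. curve_pt (Xs n) = Some x \<and> \<bar>x - l\<bar> < \<epsilon>"
    using \<open>\<epsilon> > 0\<close> by blast
  obtain M where M: "\<And>n. n \<ge> M \<Longrightarrow>
      Xs n \<notin> Some ` {r. \<bar>of_rat r\<bar> \<le> \<bar>l\<bar> + 1 \<and> of_int (denom r) \<le> K / \<delta>}"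
    using inj_eventually_notin_finite[OF Xs(1) finite_imageI[OF finite_bounded_height_rats]]
    by blast
  obtain r where r: "Xs (max N M) = Some r" "\<bar>of_rat r - l\<bar> < \<epsilon>"
    using N[of "max N M"] by (auto simp: curve_pt_def)
  have "\<bar>of_rat r - l\<bar> < 1" using r(2) by (simp add: \<epsilon>_def)
  then have r_bounded: "\<bar>of_rat r\<bar> \<le> \<bar>l\<bar> + 1" by linarith
  have "(\<bar>\<alpha>\<bar> + 1) * \<bar>of_rat r - l\<bar> \<le> (\<bar>\<alpha>\<bar> + 1) * (\<delta> / (\<bar>\<alpha>\<bar> + 1))"
    using r(2) by (intro mult_left_mono) (auto simp: \<epsilon>_def)
  also have "\<dots> = \<delta>" by simp
  finally have "\<delta> \<le> \<bar>\<alpha> * of_rat r + \<beta>\<bar>"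
    unfolding \<delta>_def by (rule affine_bounded_away_near)
  then have "of_int (denom r) * \<delta> \<le> of_int (denom r) * \<bar>\<alpha> * of_rat r + \<beta>\<bar>"
    using denom_ge_1[of r] by (intro mult_left_mono) auto
  also have "\<dots> = \<bar>class_pairing \<alpha> \<beta> (Xs (max N M))\<bar>"
    using r(1) denom_ge_1[of r] by (simp add: class_pairing_Some abs_mult)
  also have "\<dots> < K" by (rule Xs(3))
  finally have "of_int (denom r) * \<delta> < K" .
  then have "of_int (denom r) \<le> K / \<delta>"
    using \<open>\<delta> > 0\<close> by (simp add: field_simps)
  then show False using M[of "max N M"] r(1) r_bounded by auto
qed

lemma None_notin_bounded_ends:
  assumes "\<alpha> \<noteq> 0"
  shows "None \<notin> bounded_ends (\<lambda>c. \<bar>class_pairing \<alpha> \<beta> c\<bar>)"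
proof
  assume "None \<in> bounded_ends (\<lambda>c. \<bar>class_pairing \<alpha> \<beta> c\<bar>)"
  then obtain Xs K where Xs: "inj Xs" "hat_tendsto (\<lambda>n. curve_pt (Xs n)) None"
    "\<And>n. \<bar>class_pairing \<alpha> \<beta> (Xs n)\<bar> < K"
    by (erule bounded_endsE)
  obtain N where N: "\<And>n. n \<ge> N \<Longrightarrow> Xs n \<notin> {None}"
    using inj_eventually_notin_finite[OF Xs(1) finite.insertI[OF finite.emptyI]] by blast
  define M where "M = (\<bar>K\<bar> + \<bar>\<beta>\<bar>) / \<bar>\<alpha>\<bar>"
  have "\<forall>M. \<exists>N. \<forall>n\<ge>N. curve_pt (Xs n) = None \<or> (\<exists>x. curve_pt (Xs n) = Some x \<and> \<bar>x\<bar> > M)"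
    using Xs(2) by (simp add: hat_tendsto_def)
  then obtain N'
    where N': "\<forall>n\<ge>N'. curve_pt (Xs n) = None \<or> (\<exists>x. curve_pt (Xs n) = Some x \<and> \<bar>x\<bar> > M)"
    by (rule allE[of _ M]) blast
  define n where "n = max N N'"
  obtain r where r: "Xs n = Some r" using N[of n] by (auto simp: n_def)
  then have "M < \<bar>of_rat r\<bar>" using N'[rule_format, of n] by (simp add: n_def curve_pt_def)
  then have "\<bar>K\<bar> + \<bar>\<beta>\<bar> < \<bar>\<alpha>\<bar> * \<bar>of_rat r\<bar>"
    using assms by (simp add: M_def divide_less_eq mult.commute)
  moreover have "\<bar>\<alpha>\<bar> * \<bar>of_rat r\<bar> \<le> \<bar>\<alpha> * of_rat r + \<beta>\<bar> + \<bar>\<beta>\<bar>"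
    using abs_triangle_ineq4[of "\<alpha> * of_rat r + \<beta>" \<beta>] by (simp add: abs_mult)
  moreover have "\<bar>\<alpha> * of_rat r + \<beta>\<bar> \<le> \<bar>class_pairing \<alpha> \<beta> (Xs n)\<bar>"
    using r mult_right_mono[OF denom_ge_1[of r] abs_ge_zero[of "\<alpha> * of_rat r + \<beta>"]]
      denom_ge_1[of r]
    by (simp add: class_pairing_Some abs_mult)
  ultimately show False using Xs(3)[of n] by linarith
qed

lemma bounded_ends_class_pairing:
  "bounded_ends (\<lambda>c. \<bar>class_pairing \<alpha> \<beta> c\<bar>)
    = (if \<alpha> = 0 \<and> \<beta> = 0 then UNIV else {kernel_slope \<alpha> \<beta>})"
proof (cases "\<alpha> = 0 \<and> \<beta> = 0")
  case True
  have "\<Lambda> \<in> bounded_ends (\<lambda>c. \<bar>class_pairing \<alpha> \<beta> c\<bar>)" for \<Lambda>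
  proof -
    have "None = kernel_slope 0 0" "Some x = kernel_slope 1 (- x)" for x
      by (simp_all add: kernel_slope_def)
    then obtain \<alpha>' \<beta>' where "\<Lambda> = kernel_slope \<alpha>' \<beta>'"
      by (cases \<Lambda>) blast+
    moreover have "bounded_ends (\<lambda>c. \<bar>class_pairing \<alpha>' \<beta>' c\<bar>)
        \<subseteq> bounded_ends (\<lambda>c. \<bar>class_pairing \<alpha> \<beta> c\<bar>)"
      using True
      by (intro bounded_ends_mono[where \<phi> = "\<lambda>_. 0"]) (auto simp: class_pairing_def mono_def)
    ultimately show ?thesis using kernel_slope_mem_bounded_ends by blast
  qed
  then show ?thesis using True by auto
next
  case False
  have "\<Lambda> = kernel_slope \<alpha> \<beta>" if "\<Lambda> \<in> bounded_ends (\<lambda>c. \<bar>class_pairing \<alpha> \<beta> c\<bar>)" for \<Lambda>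
  proof (cases \<Lambda>)
    case None
    then show ?thesis
      using that None_notin_bounded_ends by (cases "\<alpha> = 0") (auto simp: kernel_slope_def)
  next
    case (Some l)
    have "\<alpha> * l + \<beta> = 0"
      using that Some_notin_bounded_ends unfolding Some by blast
    then show ?thesis
      using False by (auto simp: Some kernel_slope_def field_simps)
  qed
  then show ?thesis using False kernel_slope_mem_bounded_ends by auto
qed

lemma end_invariants_of_common_eigenvector:
  fixes A B :: cmat
  assumes "det A = 1" "det B = 1" "v \<noteq> 0" "A *v v = a *s v" "B *v v = b *s v"
  shows "end_invariants A B = bounded_ends (\<lambda>c. \<bar>class_pairing (ln (cmod a)) (ln (cmod b)) c\<bar>)"
    and "in_real_interval (tr_curve A B c) \<longleftrightarrow> class_pairing (ln (cmod a)) (ln (cmod b)) c = 0"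
proof -
  let ?L = "class_pairing (ln (cmod a)) (ln (cmod b))"
  have "a \<noteq> 0" "b \<noteq> 0"
    using det1_eigenvalue(1) assms by blast+
  note \<mu> = tr_curve_common_eigenvector[OF assms]
  have ln_\<mu>: "ln (cmod (curve_eigenvalue a b c)) = ?L c" for c
    by (rule ln_norm_curve_eigenvalue[OF \<open>a \<noteq> 0\<close> \<open>b \<noteq> 0\<close>])
  have bounds: "\<bar>?L c\<bar> \<le> cmod (tr_curve A B c)" "cmod (tr_curve A B c) \<le> 2 * exp \<bar>?L c\<bar>" for c
    using norm_plus_inverse_bounds[OF \<mu>(1)[of c]] by (simp_all add: \<mu>(2) ln_\<mu>)
  have "bounded_ends (\<lambda>c. \<bar>?L c\<bar>) \<subseteq> end_invariants A B"
    unfolding end_invariants_eq_bounded_ends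
    by (rule bounded_ends_mono[where \<phi> = "\<lambda>s. 2 * exp s", OF bounds(2)]) (simp add: mono_def)
  moreover have "end_invariants A B \<subseteq> bounded_ends (\<lambda>c. \<bar>?L c\<bar>)"
    unfolding end_invariants_eq_bounded_ends
    by (rule bounded_ends_mono[where \<phi> = "\<lambda>s. s", OF bounds(1)]) (simp add: mono_def)
  ultimately show "end_invariants A B = bounded_ends (\<lambda>c. \<bar>?L c\<bar>)"
    by blast
  have "cmod (curve_eigenvalue a b c) = 1 \<longleftrightarrow> ln (cmod (curve_eigenvalue a b c)) = 0"
    using \<mu>(1)[of c] by simp
  then show "in_real_interval (tr_curve A B c) \<longleftrightarrow> ?L c = 0"
    using in_real_interval_plus_inverse_iff[OF \<mu>(1)[of c]] by (simp only: \<mu>(2) ln_\<mu>)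
qed

theorem theorem1p3:
  fixes A B :: "complex^2^2"
  assumes "det A = 1" and "det B = 1"
    and "trace (A ** B ** matrix_inv A ** matrix_inv B) = 2"
  shows "(\<exists>X0. end_invariants A B = {X0}
            \<and> (\<forall>c. curve_pt c = X0 \<longrightarrow>
                   in_real_interval (tr_curve A B c) \<and>
                   (\<forall>c'. c' \<noteq> c \<longrightarrow> \<not> in_real_interval (tr_curve A B c')))
            \<and> (X0 \<notin> range curve_pt \<longrightarrow> (\<forall>c. \<not> in_real_interval (tr_curve A B c))))
       \<or> (end_invariants A B = UNIV \<and> (\<forall>c. in_real_interval (tr_curve A B c)))"
proof -
  obtain v a b where v: "v \<noteq> 0" "A *v v = a *s v" "B *v v = b *s v"
    using common_eigenvector_of_trace_commutator_2[OF assms] .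
  define \<alpha> \<beta> where "\<alpha> = ln (cmod a)" and "\<beta> = ln (cmod b)"
  note ends = end_invariants_of_common_eigenvector[OF assms(1,2) v, folded \<alpha>_def \<beta>_def]
  show ?thesis
  proof (cases "\<alpha> = 0 \<and> \<beta> = 0")
    case True
    then have "end_invariants A B = UNIV"
      using ends(1) by (simp add: bounded_ends_class_pairing)
    moreover have "in_real_interval (tr_curve A B c)" for c
      using ends(2) True by (simp add: class_pairing_def)
    ultimately show ?thesis by blast
  next
    case False
    then have "end_invariants A B = {kernel_slope \<alpha> \<beta>}"
      by (simp only: ends(1) bounded_ends_class_pairing if_not_P[OF False] if_False)
    moreover have "in_real_interval (tr_curve A B c) \<longleftrightarrow> curve_pt c = kernel_slope \<alpha> \<beta>" for c
      using ends(2) class_pairing_eq_0_iff False by blast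
    ultimately show ?thesis
      using inj_curve_pt unfolding inj_def by (metis rangeI)
  qed
qed

end
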